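(* Let $n\ge 1$, and let $b,\lambda\in\mathbb{C}$ with $|b|=1$ and $|\lambda|=1$. Define the $n\times n$ matrix $B=[b_{i,j}]_{1\le i,j\le n}$ by $b_{i,j}=0$ if $j<i$; $b_{i,j}=(-1)^{j+1}\binom{j-2}{i-2}\dfrac{b}{\lambda^{i+j-2}}$ if $j\ge i$ and $i>1$; $b_{1,1}=b$; and $b_{1,j}=0$ for $2\le j\le n$. Then $B\overline{B}=I$.
   Context: $\overline{B}$ denotes the entrywise complex conjugate of $B$. *)

theory Defs
  imports Complex_Main "Jordan_Normal_Form.Matrix"
begin

definition B_entry :: "complex \<Rightarrow> complex \<Rightarrow> nat \<Rightarrow> nat \<Rightarrow> complex" where
  "B_entry b lam i j =
     (if j < i then 0
      else if i > 1 then (-1) ^ (j + 1) * of_nat ((j - 2) choose (i - 2)) * b / lam ^ (i + j - 2)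
      else if j = 1 then b
      else 0)"

text \<open>The n x n matrix B (Jordan_Normal_Form matrices are 0-indexed, hence the shift).\<close>
definition B_mat :: "nat \<Rightarrow> complex \<Rightarrow> complex \<Rightarrow> complex mat" where
  "B_mat n b lam = mat n n (\<lambda>(i, j). B_entry b lam (i + 1) (j + 1))"

definition conj_mat :: "complex mat \<Rightarrow> complex mat" where
  "conj_mat A = map_mat cnj A"

end

theory Submission
  imports Defs
begin

(* B = diag(b, -b D S D) with D = diag(lam^-1, lam^-2, ...) and S the signed Pascal
   matrix, S(a,c) = (-1)^c C(c,a). Since |b| = |lam| = 1, conjugation replaces b by 1/b
   and D by its inverse, so B conj(B) = diag(1, D S S D^-1), and S is an involution:
   sum_c (-1)^(c+e) C(c,a) C(e,c) = [a = e], by the subset-of-a-subset identity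
   C(e,c) C(c,a) = C(e,a) C(e-a,c-a) and the vanishing alternating row sums of
   Pascal's triangle. *)

lemma sum_alternating_choose_mult_choose:
  "(\<Sum>j\<le>c. (-1) ^ (j + c) * of_nat (j choose a) * of_nat (c choose j))
    = (of_bool (a = c) :: 'a::comm_ring_1)"
proof (cases "a \<le> c")
  case False
  then show ?thesis by (simp, intro sum.neutral) (simp add: binomial_eq_0)
next
  case True
  then obtain m where c: "c = a + m" using le_Suc_ex by blast
  have "(\<Sum>j\<le>c. (-1) ^ (j + c) * of_nat (j choose a) * of_nat (c choose j) :: 'a)
      = (\<Sum>j\<in>{0 + a..m + a}. (-1) ^ (j + c) * of_nat (j choose a) * of_nat (c choose j))"
    by (rule sum.mono_neutral_right) (auto simp: c binomial_eq_0)
  also have "\<dots> = (\<Sum>d\<le>m. (-1) ^ (d + a + c) * of_nat ((d + a) choose a) * of_nat (c choose (d + a)))"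
    by (simp only: sum.shift_bounds_cl_nat_ivl atLeast0AtMost)
  also have "\<dots> = (\<Sum>d\<le>m. of_nat (c choose a) * (-1) ^ m * ((-1) ^ d * of_nat (m choose d)))"
  proof (rule sum.cong[OF refl])
    fix d assume "d \<in> {..m}"
    then have "of_nat (c choose (d + a)) * of_nat ((d + a) choose a)
        = (of_nat (c choose a) * of_nat (m choose d) :: 'a)"
      using choose_mult[of a "d + a" c] by (simp add: c flip: of_nat_mult)
    moreover have "(-1 :: 'a) ^ (d + a + c) = (-1) ^ m * (-1) ^ d"
      by (simp add: c power_add minus_one_power_iff)
    ultimately show "(-1) ^ (d + a + c) * of_nat ((d + a) choose a) * of_nat (c choose (d + a))
        = of_nat (c choose a) * (-1) ^ m * ((-1 :: 'a) ^ d * of_nat (m choose d))"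
      by (simp add: mult_ac)
  qed
  also have "\<dots> = of_bool (a = c)"
    by (cases "m = 0") (simp_all add: c choose_alternating_sum flip: sum_distrib_left)
  finally show ?thesis .
qed

lemma mult_cnj_eq_1_if_cmod_1: "cmod z = 1 \<Longrightarrow> z * cnj z = 1"
  using complex_norm_square[of z] by simp

lemma B_entry_first_row: "B_entry b lam (Suc 0) (Suc j) = (if j = 0 then b else 0)"
  by (simp add: B_entry_def)

lemma B_entry_first_column: "B_entry b lam (Suc i) (Suc 0) = (if i = 0 then b else 0)"
  by (simp add: B_entry_def)

lemma B_entry_lower_block:
  "B_entry b lam (Suc (Suc a)) (Suc (Suc c)) =
     (-1) ^ Suc c * of_nat (c choose a) * b * inverse lam ^ Suc a * inverse lam ^ Suc c"
  by (cases "c < a")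
    (simp_all add: B_entry_def binomial_eq_0 divide_inverse power_add mult_ac flip: power_inverse)

lemma B_lower_block_mult_conj:
  assumes b: "cmod b = 1" and lam: "cmod lam = 1" and "e < m"
  shows "(\<Sum>c<m. B_entry b lam (Suc (Suc a)) (Suc (Suc c))
                   * cnj (B_entry b lam (Suc (Suc c)) (Suc (Suc e)))) = of_bool (a = e)"
proof -
  have "b * cnj b = 1"
    using b by (rule mult_cnj_eq_1_if_cmod_1)
  have "inverse lam = cnj lam"
    using divide_conv_cnj[OF lam, of 1] by (simp add: inverse_eq_divide)
  have "inverse lam * lam = 1"
    using lam by (intro left_inverse) auto
  have "B_entry b lam (Suc (Suc a)) (Suc (Suc c)) * cnj (B_entry b lam (Suc (Suc c)) (Suc (Suc e)))
      = ((-1) ^ Suc c * (-1) ^ Suc e) * (of_nat (c choose a) * of_nat (e choose c)) * (b * cnj b)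
        * (inverse lam * lam) ^ Suc c * (inverse lam ^ Suc a * lam ^ Suc e)" for c
    using \<open>inverse lam = cnj lam\<close>
    by (simp only: B_entry_lower_block complex_cnj_mult complex_cnj_power complex_cnj_of_nat
        complex_cnj_minus complex_cnj_one complex_cnj_cnj power_mult_distrib mult_ac)
  also have "\<dots> c = inverse lam ^ Suc a * lam ^ Suc e
      * ((-1) ^ (c + e) * of_nat (c choose a) * of_nat (e choose c))" for c
    using \<open>b * cnj b = 1\<close> \<open>inverse lam * lam = 1\<close> by (simp add: power_add)
  finally have "(\<Sum>c<m. B_entry b lam (Suc (Suc a)) (Suc (Suc c)) * cnj (B_entry b lam (Suc (Suc c)) (Suc (Suc e))))
      = inverse lam ^ Suc a * lam ^ Suc e * (\<Sum>c<m. (-1) ^ (c + e) * of_nat (c choose a) * of_nat (e choose c))"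
    by (simp add: sum_distrib_left)
  also have "(\<Sum>c<m. (-1) ^ (c + e) * of_nat (c choose a) * of_nat (e choose c))
      = (\<Sum>c\<le>e. (-1) ^ (c + e) * of_nat (c choose a) * (of_nat (e choose c) :: complex))"
    by (rule sum.mono_neutral_right) (use \<open>e < m\<close> in \<open>auto simp: binomial_eq_0\<close>)
  also have "\<dots> = of_bool (a = e)"
    by (rule sum_alternating_choose_mult_choose)
  finally show ?thesis
    using \<open>inverse lam * lam = 1\<close> by (simp del: power_Suc flip: power_mult_distrib)
qed

lemma B_mult_conj_B_entry:
  assumes b: "cmod b = 1" and lam: "cmod lam = 1" and "i < n" "k < n"
  shows "(\<Sum>j<n. B_entry b lam (Suc i) (Suc j) * cnj (B_entry b lam (Suc j) (Suc k))) = of_bool (i = k)"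
proof -
  obtain m where n: "n = Suc m"
    using \<open>i < n\<close> by (cases n) auto
  have "(\<Sum>j<n. B_entry b lam (Suc i) (Suc j) * cnj (B_entry b lam (Suc j) (Suc k)))
      = B_entry b lam (Suc i) (Suc 0) * cnj (B_entry b lam (Suc 0) (Suc k))
        + (\<Sum>c<m. B_entry b lam (Suc i) (Suc (Suc c)) * cnj (B_entry b lam (Suc (Suc c)) (Suc k)))"
    unfolding n sum.lessThan_Suc_shift ..
  moreover have "b * cnj b = 1"
    using b by (rule mult_cnj_eq_1_if_cmod_1)
  ultimately show ?thesis
    using assms B_lower_block_mult_conj[OF b lam]
    by (cases i; cases k) (simp_all add: n B_entry_first_row B_entry_first_column)
qed

theorem lemma3p5:
  fixes n :: nat and b lam :: complex
  assumes "n \<ge> 1" and "cmod b = 1" and "cmod lam = 1"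
  shows "B_mat n b lam * conj_mat (B_mat n b lam) = 1\<^sub>m n"
proof (rule eq_matI)
  fix i k
  assume "i < dim_row (1\<^sub>m n :: complex mat)" "k < dim_col (1\<^sub>m n :: complex mat)"
  then have "i < n" "k < n"
    by auto
  then show "(B_mat n b lam * conj_mat (B_mat n b lam)) $$ (i, k) = (1\<^sub>m n :: complex mat) $$ (i, k)"
    using B_mult_conj_B_entry[OF assms(2,3)]
    by (simp add: B_mat_def conj_mat_def scalar_prod_def lessThan_atLeast0)
qed (auto simp: B_mat_def conj_mat_def)

end
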